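(* Let $N\ge 2$, $d\ge1$. Let $\bar{\mathscr L}\in\mathbb{R}^{N\times N}$ be a real symmetric matrix with zero row sums whose eigenvalues are $0$ (simple) and $\gamma$ with multiplicity $N-1$. Let $\mathscr B\in\mathbb{R}^{N\times N}$ be symmetric with all row sums equal to $e$. Let $\epsilon,\lambda,d^{[1]}\in\mathbb{R}$, let $t\mapsto \mathbf x_s(t),\mathbf y_s(t)\in\mathbb{R}^d$ be given, and let $F_1,F_2:\mathbb{R}^d\to\mathbb{R}^d$, $G^{[1]},G^{[2]},H_1,H_2:\mathbb{R}^d\times\mathbb{R}^d\to\mathbb{R}^d$ be continuously differentiable. Write $J$ (resp. $D$) for the Jacobian with respect to the first (resp. second) argument, all evaluated along $(\mathbf x_s,\mathbf x_s)$, $(\mathbf y_s,\mathbf y_s)$, $(\mathbf x_s,\mathbf y_s)$ or $(\mathbf y_s,\mathbf x_s)$ as appropriate. Consider the linear system for $\delta\bar{\mathbf x},\delta\bar{\mathbf y}\in\mathbb{R}^{Nd}$: $$\delta\dot{\bar{\mathbf x}}=\big[I_N\otimes\big(JF_1(\mathbf x_s)+\epsilon d^{[1]}(JG^{[1]}(\mathbf x_s,\mathbf x_s)+DG^{[1]}(\mathbf x_s,\mathbf x_s))+\lambda e\,JH_1(\mathbf x_s,\mathbf y_s)\big)-\epsilon\,\bar{\mathscr L}\otimes DG^{[1]}(\mathbf x_s,\mathbf x_s)\big]\delta\bar{\mathbf x}+\lambda\,(\mathscr B\otimes DH_1(\mathbf x_s,\mathbf y_s))\,\delta\bar{\mathbf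 y},$$ $$\delta\dot{\bar{\mathbf y}}=\big[I_N\otimes\big(JF_2(\mathbf y_s)+\epsilon d^{[1]}(JG^{[2]}(\mathbf y_s,\mathbf y_s)+DG^{[2]}(\mathbf y_s,\mathbf y_s))+\lambda e\,JH_2(\mathbf y_s,\mathbf x_s)\big)-\epsilon\,\bar{\mathscr L}\otimes DG^{[2]}(\mathbf y_s,\mathbf y_s)\big]\delta\bar{\mathbf y}+\lambda\,(\mathscr B\otimes DH_2(\mathbf y_s,\mathbf x_s))\,\delta\bar{\mathbf x}.$$ Let $e,\Gamma_2,\dots,\Gamma_N$ be the eigenvalues of $\mathscr B$, where $e$ corresponds to the eigenvector $\mathbf 1=(1,\dots,1)^{tr}$. Then there is an orthogonal matrix $V\in\mathbb{R}^{N\times N}$ with first column $\mathbf 1/\sqrt N$ such that, writing $\eta^{(\bar{\mathbf x})}=(V\otimes I_d)^{tr}\delta\bar{\mathbf x}$ and $\eta^{(\bar{\mathbf y})}=(V\otimes I_d)^{tr}\delta\bar{\mathbf y}$ with $d$-dimensional blocks $\eta^{(\bar{\mathbf x})}_{i},\eta^{(\bar{\mathbf y})}_{i}$, $i=1,\dots,N$, each pair $(\eta^{(\bar{\mathbf x})}_{i},\eta^{(\bar{\mathbf y})}_{i})$ for $i=2,\dots,N$ satisfies the closed $2d$-dimensional system $$\dot\eta^{(\bar{\mathbf x})}_{i}=\big[JF_1(\mathbf x_s)+\epsilon d^{[1]}(JG^{[1]}+DG^{[1]})(\mathbf x_s,\mathbf x_s)-\epsilon\gamma\,DG^{[1]}(\mathbf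 x_s,\mathbf x_s)+\lambda e\,JH_1(\mathbf x_s,\mathbf y_s)\big]\eta^{(\bar{\mathbf x})}_{i}+\lambda\Gamma_i\,DH_1(\mathbf x_s,\mathbf y_s)\eta^{(\bar{\mathbf y})}_{i},$$ $$\dot\eta^{(\bar{\mathbf y})}_{i}=\big[JF_2(\mathbf y_s)+\epsilon d^{[1]}(JG^{[2]}+DG^{[2]})(\mathbf y_s,\mathbf y_s)-\epsilon\gamma\,DG^{[2]}(\mathbf y_s,\mathbf y_s)+\lambda e\,JH_2(\mathbf y_s,\mathbf x_s)\big]\eta^{(\bar{\mathbf y})}_{i}+\lambda\Gamma_i\,DH_2(\mathbf y_s,\mathbf x_s)\eta^{(\bar{\mathbf x})}_{i},$$ i.e. the $2d(N-1)$-dimensional transverse error system decouples into $N-1$ independent $2d$-dimensional linear systems.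
   Context: This is the linearization, about an intralayer synchronous solution $(\mathbf x_s,\mathbf y_s)$, of a two-layer network with a single intralayer connection type (tier), with time-averaged intralayer Laplacian $\bar{\mathscr L}$ (identical in both layers), common interlayer adjacency $\mathscr B^{[1]}=\mathscr B^{[2]}=\mathscr B$ with constant interlayer degree $e$, constant intralayer degree $d^{[1]}$, intralayer coupling strength $\epsilon$ and interlayer coupling strength $\lambda$. The pair $(\eta^{(\bar{\mathbf x})}_1,\eta^{(\bar{\mathbf y})}_1)$ describes the mode parallel to the synchronization manifold, and the pairs with $i\ge2$ the transverse modes. *)

theory Defs
  imports "HOL-Analysis.Analysis"
begin

text \<open>Kronecker product of matrices; vectors in R^(N d) are indexed by pairs (i,k),
  i the node index (block), k the coordinate inside the d-dimensional block.\<close>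
definition kron :: "real^'n^'m \<Rightarrow> real^'q^'p \<Rightarrow> real^('n \<times> 'q)^('m \<times> 'p)" where
  "kron A B = (\<chi> ik. \<chi> jl. A $ fst ik $ fst jl * B $ snd ik $ snd jl)"

definition blk :: "real^('n::finite \<times> 'd::finite) \<Rightarrow> 'n \<Rightarrow> real^'d" where
  "blk z i = (\<chi> k. z $ (i, k))"

definition C1_map :: "('a::real_normed_vector \<Rightarrow> 'b::real_normed_vector) \<Rightarrow> bool" where
  "C1_map f \<longleftrightarrow> (\<exists>f'. (\<forall>x. (f has_derivative blinfun_apply (f' x)) (at x)) \<and> continuous_on UNIV f')"

definition jac :: "(real^'d \<Rightarrow> real^'e) \<Rightarrow> real^'d \<Rightarrow> real^'d^'e" where
  "jac F x = matrix (frechet_derivative F (at x))"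

definition jacJ :: "(real^'d \<Rightarrow> real^'c \<Rightarrow> real^'e) \<Rightarrow> real^'d \<Rightarrow> real^'c \<Rightarrow> real^'d^'e" where
  "jacJ G x y = matrix (frechet_derivative (\<lambda>u. G u y) (at x))"

definition jacD :: "(real^'d \<Rightarrow> real^'c \<Rightarrow> real^'e) \<Rightarrow> real^'d \<Rightarrow> real^'c \<Rightarrow> real^'c^'e" where
  "jacD G x y = matrix (frechet_derivative (\<lambda>v. G x v) (at y))"

end

theory Submission
  imports Defs
begin

text \<open>
  Since \<open>B\<close> is symmetric and \<open>1/\<surd>N\<close> is a unit eigenvector of it, \<open>B\<close> has an orthonormal
  eigenbasis containing \<open>1/\<surd>N\<close> (spectral theorem, via maximising the Rayleigh quotient
  on invariant subspaces). Every other basis vector is orthogonal to \<open>1\<close> and hence a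
  \<open>\<gamma>\<close>-eigenvector of \<open>L\<close>: the \<open>\<gamma>\<close>-eigenspace of \<open>L\<close> lies in the hyperplane \<open>1\<^sup>\<bottom>\<close>
  (because \<open>L 1 = 0\<close>, \<open>L\<close> is symmetric and \<open>\<gamma> \<noteq> 0\<close>) and has the same dimension \<open>N - 1\<close>.
  If \<open>v\<close> is a left eigenvector of \<open>P\<close> with eigenvalue \<open>c\<close>, the mixed-product rule gives
  \<open>(v\<^sup>T \<otimes> I) (P \<otimes> Q) = c (v\<^sup>T \<otimes> Q) = c Q (v\<^sup>T \<otimes> I)\<close>. Applied with \<open>P = L, B\<close> and
  \<open>v\<close> a column of \<open>V\<close>, this turns the error equations into a closed system for the
  \<open>v\<close>-block \<open>(v\<^sup>T \<otimes> I) \<delta>\<close>, since differentiation commutes with this linear map.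
\<close>

lemma sum_UNIV_prod:
  "(\<Sum>p\<in>(UNIV::('a::finite \<times> 'b::finite) set). f p) = (\<Sum>a\<in>UNIV. \<Sum>b\<in>UNIV. f (a, b))"
  by (simp add: sum.cartesian_product UNIV_Times_UNIV[symmetric] del: UNIV_Times_UNIV)

lemma transpose_kron: "transpose (kron A B) = kron (transpose A) (transpose B)"
  by (simp add: vec_eq_iff transpose_def kron_def)

lemma kron_mult: "kron A B ** kron C D = kron (A ** C) (B ** D)"
  by (simp add: vec_eq_iff matrix_matrix_mult_def kron_def sum_UNIV_prod sum_product mult_ac)

lemma blk_add: "blk (x + y) i = blk x i + blk y i"
  and blk_diff: "blk (x - y) i = blk x i - blk y i"
  and blk_scaleR: "blk (c *\<^sub>R x) i = c *\<^sub>R blk x i"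
  by (simp_all add: blk_def vec_eq_iff)

lemma bounded_linear_blk: "bounded_linear (\<lambda>z. blk z i)"
  by (rule linear_conv_bounded_linear[THEN iffD1], rule linearI) (simp_all add: blk_add blk_scaleR)

lemma blk_kron_mult_vector:
  "blk (kron A Q *v z) i = (\<Sum>m\<in>UNIV. A $ i $ m *\<^sub>R (Q *v blk z m))"
  by (simp add: vec_eq_iff blk_def matrix_vector_mult_def kron_def sum_UNIV_prod
      sum_component sum_distrib_left mult.assoc)

lemma blk_kron_mult_left_eigenvector:
  fixes V P :: "real^'n::finite^'n" and Q :: "real^'d::finite^'d" and z :: "real^('n \<times> 'd)"
  assumes "transpose P *v column i V = c *\<^sub>R column i V"
  shows "blk (transpose (kron V (mat 1 :: real^'d^'d)) *v (kron P Q *v z)) i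
       = c *\<^sub>R (Q *v blk (transpose (kron V (mat 1 :: real^'d^'d)) *v z) i)"
proof -
  have row: "(transpose V ** P) $ i $ m = c * transpose V $ i $ m" for m
    using arg_cong[OF assms, of "\<lambda>v. v $ m"]
    by (simp add: matrix_matrix_mult_def matrix_vector_mult_def transpose_def column_def mult.commute)
  have "blk (transpose (kron V (mat 1 :: real^'d^'d)) *v (kron P Q *v z)) i
      = blk (kron (transpose V ** P) Q *v z) i"
    by (simp add: transpose_kron matrix_vector_mul_assoc kron_mult)
  also have "\<dots> = c *\<^sub>R (\<Sum>m\<in>UNIV. transpose V $ i $ m *\<^sub>R (Q *v blk z m))"
    by (simp add: blk_kron_mult_vector row scaleR_sum_right)
  also have "\<dots> = c *\<^sub>R (Q *v blk (transpose (kron V (mat 1 :: real^'d^'d)) *v z) i)"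
    by (simp add: transpose_kron blk_kron_mult_vector matrix_vector_mult_scaleR
        linear_sum[OF matrix_vector_mul_linear] o_def)
  finally show ?thesis .
qed

lemma transverse_mode_has_vector_derivative:
  fixes V L B :: "real^'n::finite^'n" and M D H :: "real^'d::finite^'d"
    and dx dy :: "real \<Rightarrow> real^('n \<times> 'd)"
  assumes L: "transpose L *v column i V = \<gamma> *\<^sub>R column i V"
    and B: "transpose B *v column i V = \<Gamma> *\<^sub>R column i V"
    and dx: "(dx has_vector_derivative
               ((kron (mat 1) M - \<epsilon> *\<^sub>R kron L D) *v dx t + lam *\<^sub>R (kron B H *v dy t))) (at t)"
  shows "((\<lambda>s. blk (transpose (kron V (mat 1 :: real^'d^'d)) *v dx s) i) has_vector_derivative
           ((M - (\<epsilon> * \<gamma>) *\<^sub>R D) *v blk (transpose (kron V (mat 1 :: real^'d^'d)) *v dx t) i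
            + (lam * \<Gamma>) *\<^sub>R (H *v blk (transpose (kron V (mat 1 :: real^'d^'d)) *v dy t) i))) (at t)"
proof -
  let ?W = "transpose (kron V (mat 1 :: real^'d^'d))"
  let ?\<eta> = "\<lambda>z. blk (?W *v z) i"
  let ?rhs = "(kron (mat 1) M - \<epsilon> *\<^sub>R kron L D) *v dx t + lam *\<^sub>R (kron B H *v dy t)"
  have lin: "bounded_linear ?\<eta>"
    by (intro bounded_linear_compose[OF bounded_linear_blk] matrix_vector_mul_bounded_linear)
  have I: "transpose (mat 1) *v column i V = 1 *\<^sub>R column i V" by simp
  have "?\<eta> ?rhs
      = ?\<eta> (kron (mat 1) M *v dx t) - \<epsilon> *\<^sub>R ?\<eta> (kron L D *v dx t) + lam *\<^sub>R ?\<eta> (kron B H *v dy t)"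
    by (simp only: matrix_vector_mult_diff_rdistrib scaleR_matrix_vector_assoc[symmetric] matrix_vector_right_distrib
        matrix_vector_mult_diff_distrib matrix_vector_mult_scaleR blk_add blk_diff blk_scaleR)
  also have "\<dots> = M *v ?\<eta> (dx t) - \<epsilon> *\<^sub>R (\<gamma> *\<^sub>R (D *v ?\<eta> (dx t))) + lam *\<^sub>R (\<Gamma> *\<^sub>R (H *v ?\<eta> (dy t)))"
    using blk_kron_mult_left_eigenvector[OF I, of M "dx t"] blk_kron_mult_left_eigenvector[OF L, of D "dx t"]
      blk_kron_mult_left_eigenvector[OF B, of H "dy t"]
    by (simp only: scaleR_one)
  also have "\<dots> = (M - (\<epsilon> * \<gamma>) *\<^sub>R D) *v ?\<eta> (dx t) + (lam * \<Gamma>) *\<^sub>R (H *v ?\<eta> (dy t))"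
    by (simp only: matrix_vector_mult_diff_rdistrib scaleR_matrix_vector_assoc[symmetric] scaleR_scaleR)
  finally show ?thesis
    using bounded_linear.has_vector_derivative[OF lin dx] by simp
qed

lemma linear_coeff_eq_0_if_quadratic_nonpos:
  fixes a b :: real
  assumes "\<And>t. a * t + b * t\<^sup>2 \<le> 0"
  shows "a = 0"
proof (rule ccontr)
  assume "a \<noteq> 0"
  define t where "t = a / (\<bar>b\<bar> + 1)"
  have "a = t * (\<bar>b\<bar> + 1)"
    by (simp add: t_def add_pos_nonneg)
  then have "a * t + b * t\<^sup>2 = t\<^sup>2 * (\<bar>b\<bar> + b + 1)"
    by (simp add: algebra_simps power2_eq_square)
  also have "\<dots> > 0"
    using \<open>a \<noteq> 0\<close> by (intro mult_pos_pos) (auto simp: t_def)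
  finally show False using assms[of t] by simp
qed

lemma symmetric_matrix_inner_commute:
  fixes A :: "real^'n::finite^'n"
  assumes "transpose A = A"
  shows "(A *v x) \<bullet> y = x \<bullet> (A *v y)"
  by (metis assms dot_lmul_matrix vector_transpose_matrix)

lemma symmetric_quadratic_form_add:
  fixes A :: "real^'n::finite^'n"
  assumes "transpose A = A"
  shows "(x + y) \<bullet> (A *v (x + y)) = x \<bullet> (A *v x) + 2 * (y \<bullet> (A *v x)) + y \<bullet> (A *v y)"
proof -
  have "x \<bullet> (A *v y) = y \<bullet> (A *v x)"
    by (metis symmetric_matrix_inner_commute[OF assms] inner_commute)
  then show ?thesis
    by (simp add: matrix_vector_right_distrib inner_add_left inner_add_right)
qed

lemma rayleigh_quotient_attains_max:
  fixes A :: "real^'n::finite^'n"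
  assumes S: "subspace S" "S \<noteq> {0}"
  obtains v where "v \<in> S" "norm v = 1" "\<And>x. x \<in> S \<Longrightarrow> x \<bullet> (A *v x) \<le> (v \<bullet> (A *v v)) * (x \<bullet> x)"
proof -
  let ?K = "sphere 0 1 \<inter> S" and ?f = "\<lambda>x. x \<bullet> (A *v x)"
  obtain x0 where "x0 \<in> S" "x0 \<noteq> 0" using S subspace_0 by blast
  then have "x0 /\<^sub>R norm x0 \<in> ?K" using S by (simp add: subspace_scale)
  moreover have "compact ?K" by (intro compact_Int_closed compact_sphere closed_subspace S)
  moreover have "continuous_on ?K ?f"
    by (intro continuous_intros linear_continuous_on matrix_vector_mul_linear)
  ultimately obtain v where v: "v \<in> ?K" and max: "\<And>y. y \<in> ?K \<Longrightarrow> ?f y \<le> ?f v"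
    using continuous_attains_sup[of ?K ?f] by blast
  have "?f x \<le> ?f v * (x \<bullet> x)" if "x \<in> S" for x
  proof (cases "x = 0")
    case False
    then have "?f (x /\<^sub>R norm x) \<le> ?f v" using that S by (intro max) (simp add: subspace_scale)
    then show ?thesis
      using False by (simp add: matrix_vector_mult_scaleR field_simps dot_square_norm power2_eq_square)
  qed simp
  with v that show ?thesis by auto
qed

lemma rayleigh_maximizer_is_eigenvector:
  fixes A :: "real^'n::finite^'n"
  assumes sym: "transpose A = A" and S: "subspace S" "\<And>x. x \<in> S \<Longrightarrow> A *v x \<in> S"
    and v: "v \<in> S" "norm v = 1"
    and max: "\<And>x. x \<in> S \<Longrightarrow> x \<bullet> (A *v x) \<le> (v \<bullet> (A *v v)) * (x \<bullet> x)"
  shows "A *v v = (v \<bullet> (A *v v)) *\<^sub>R v"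
proof -
  \<comment> \<open>Along \<open>v + t w\<close> the maximality of \<open>v\<close> is a quadratic inequality in \<open>t\<close> whose linear
    coefficient is \<open>2 (w \<bullet> w)\<close>; it must vanish.\<close>
  define m where "m = v \<bullet> (A *v v)"
  define w where "w = A *v v - m *\<^sub>R v"
  have vv: "v \<bullet> v = 1" using v by (simp add: norm_eq_1)
  have wv: "w \<bullet> v = 0"
    using vv by (simp add: w_def m_def inner_diff_left inner_diff_right inner_commute)
  have wAv: "w \<bullet> (A *v v) = w \<bullet> w"
    using wv by (simp add: w_def inner_diff_right)
  have "2 * (w \<bullet> w) * t + (w \<bullet> (A *v w) - m * (w \<bullet> w)) * t\<^sup>2 \<le> 0" for t
  proof -
    have "v + t *\<^sub>R w \<in> S"
      using v S by (simp add: w_def subspace_add subspace_scale subspace_diff)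
    have "m + 2 * t * (w \<bullet> w) + t\<^sup>2 * (w \<bullet> (A *v w)) = (v + t *\<^sub>R w) \<bullet> (A *v (v + t *\<^sub>R w))"
      by (simp add: symmetric_quadratic_form_add[OF sym] matrix_vector_mult_scaleR wAv m_def power2_eq_square)
    also have "\<dots> \<le> m * ((v + t *\<^sub>R w) \<bullet> (v + t *\<^sub>R w))"
      using max \<open>v + t *\<^sub>R w \<in> S\<close> unfolding m_def by blast
    also have "\<dots> = m * (1 + t\<^sup>2 * (w \<bullet> w))"
      using vv wv by (simp add: inner_add_left inner_add_right inner_commute power2_eq_square)
    finally show ?thesis by (simp add: algebra_simps)
  qed
  then have "w \<bullet> w = 0"
    using linear_coeff_eq_0_if_quadratic_nonpos by fastforce
  then show ?thesis by (simp add: w_def m_def)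
qed

lemma symmetric_invariant_subspace_has_eigenvector:
  fixes A :: "real^'n::finite^'n"
  assumes "transpose A = A" "subspace S" "S \<noteq> {0}" "\<And>x. x \<in> S \<Longrightarrow> A *v x \<in> S"
  obtains v c where "v \<in> S" "norm v = 1" "A *v v = c *\<^sub>R v"
proof -
  obtain v where v: "v \<in> S" "norm v = 1"
    and max: "\<And>x. x \<in> S \<Longrightarrow> x \<bullet> (A *v x) \<le> (v \<bullet> (A *v v)) * (x \<bullet> x)"
    using rayleigh_quotient_attains_max[OF assms(2,3)] by blast
  show thesis
    by (rule that[OF v rayleigh_maximizer_is_eigenvector[OF assms(1,2,4) v max]])
qed

definition orthonormal_eigenvectors :: "real^'n::finite^'n \<Rightarrow> (real^'n) set \<Rightarrow> bool" where
  "orthonormal_eigenvectors A E \<longleftrightarrow>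
     pairwise orthogonal E \<and> (\<forall>x\<in>E. norm x = 1 \<and> (\<exists>c. A *v x = c *\<^sub>R x))"

lemma orthonormal_eigenvectors_card_le:
  fixes A :: "real^'n::finite^'n"
  assumes "orthonormal_eigenvectors A E"
  shows "finite E" "card E \<le> CARD('n)"
proof -
  have "independent E"
    using assms by (intro pairwise_orthogonal_independent) (auto simp: orthonormal_eigenvectors_def)
  then show "finite E" "card E \<le> CARD('n)" using independent_bound by fastforce+
qed

lemma orthonormal_eigenvectors_insert:
  fixes A :: "real^'n::finite^'n"
  assumes sym: "transpose A = A" and E: "orthonormal_eigenvectors A E" and card: "card E < CARD('n)"
  obtains v where "v \<notin> E" "orthonormal_eigenvectors A (insert v E)"
proof -
  let ?S = "{y. \<forall>x\<in>E. orthogonal x y}"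
  have "dim E < DIM(real^'n)" using dim_le_card' orthonormal_eigenvectors_card_le(1)[OF E] card by fastforce
  then obtain x0 where "x0 \<noteq> 0" "\<And>y. y \<in> span E \<Longrightarrow> orthogonal x0 y"
    using orthogonal_to_subspace_exists by blast
  then have "?S \<noteq> {0}" by (auto simp: orthogonal_commute span_base)
  moreover have "A *v y \<in> ?S" if "y \<in> ?S" for y
  proof (intro CollectI ballI)
    fix x assume "x \<in> E"
    then obtain c where "A *v x = c *\<^sub>R x" using E by (auto simp: orthonormal_eigenvectors_def)
    then have "x \<bullet> (A *v y) = c * (x \<bullet> y)"
      by (metis symmetric_matrix_inner_commute[OF sym] inner_scaleR_left)
    with \<open>x \<in> E\<close> that show "orthogonal x (A *v y)" by (simp add: orthogonal_def)
  qed
  ultimately obtain v c where v: "v \<in> ?S" "norm v = 1" "A *v v = c *\<^sub>R v"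
    using symmetric_invariant_subspace_has_eigenvector[OF sym subspace_orthogonal_to_vectors] by blast
  then have "v \<notin> E" by (auto simp: orthogonal_def simp flip: norm_eq_1)
  moreover have "orthonormal_eigenvectors A (insert v E)"
    using E v by (auto simp: orthonormal_eigenvectors_def pairwise_insert orthogonal_commute)
  ultimately show thesis using that by blast
qed

lemma orthonormal_eigenvectors_extend_to_basis:
  fixes A :: "real^'n::finite^'n"
  assumes "transpose A = A" "orthonormal_eigenvectors A E"
  obtains E' where "E \<subseteq> E'" "orthonormal_eigenvectors A E'" "card E' = CARD('n)"
  using assms(2)
proof (induction "CARD('n) - card E" arbitrary: E rule: less_induct)
  case less
  show ?case
  proof (cases "card E < CARD('n)")
    case True
    then obtain v where "v \<notin> E" "orthonormal_eigenvectors A (insert v E)"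
      using orthonormal_eigenvectors_insert[OF assms(1) less.prems(2)] by blast
    moreover have "finite E" using orthonormal_eigenvectors_card_le(1)[OF less.prems(2)] .
    ultimately show ?thesis
      using less.hyps[of "insert v E"] less.prems(1) True by force
  next
    case False
    then show ?thesis
      using less.prems orthonormal_eigenvectors_card_le(2) by (metis le_antisym not_less order_refl)
  qed
qed

lemma symmetric_matrix_orthogonal_eigenbasis:
  fixes A :: "real^'n::finite^'n"
  assumes sym: "transpose A = A" and u: "norm u = 1" "A *v u = c *\<^sub>R u"
  obtains V i1 \<Gamma> where "orthogonal_matrix V" "column i1 V = u"
    "\<And>i. A *v column i V = \<Gamma> i *\<^sub>R column i V"
proof -
  have "orthonormal_eigenvectors A {u}"
    using u by (auto simp: orthonormal_eigenvectors_def)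
  then obtain E where E: "u \<in> E" "orthonormal_eigenvectors A E" "card E = CARD('n)"
    using orthonormal_eigenvectors_extend_to_basis[OF sym] by blast
  then obtain g :: "'n \<Rightarrow> real^'n" where g: "bij_betw g UNIV E"
    using finite_same_card_bij[of "UNIV :: 'n set" E] orthonormal_eigenvectors_card_le(1) by fastforce
  then obtain i1 where i1: "g i1 = u" using E(1) by (metis bij_betw_imp_surj_on imageE)
  have gE: "g i \<in> E" for i using g by (auto simp: bij_betw_def)
  have "\<forall>i. \<exists>c. A *v g i = c *\<^sub>R g i"
    using E(2) gE by (auto simp: orthonormal_eigenvectors_def)
  then obtain \<Gamma> where \<Gamma>: "\<And>i. A *v g i = \<Gamma> i *\<^sub>R g i" by metis
  define V :: "real^'n^'n" where "V = (\<chi> r c. g c $ r)"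
  have col: "column i V = g i" for i by (simp add: V_def column_def vec_eq_iff)
  have "orthogonal_matrix V"
    unfolding orthogonal_matrix_orthonormal_columns col
  proof (intro conjI allI impI)
    show "norm (g i) = 1" for i
      using E(2) gE by (auto simp: orthonormal_eigenvectors_def)
    show "orthogonal (g i) (g j)" if "i \<noteq> j" for i j
      using E(2) gE bij_betw_imp_inj_on[OF g] that
      unfolding orthonormal_eigenvectors_def pairwise_def inj_on_def by blast
  qed
  then show thesis using that[of V i1 \<Gamma>] col i1 \<Gamma> by simp
qed

lemma eigenspace_eq_orthogonal_1:
  fixes L :: "real^'n::finite^'n"
  assumes sym: "transpose L = L" and L1: "L *v 1 = 0" and "\<gamma> \<noteq> 0"
    and dim: "dim {v. L *v v = \<gamma> *\<^sub>R v} = CARD('n) - 1"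
  shows "{v. L *v v = \<gamma> *\<^sub>R v} = {v. 1 \<bullet> v = 0}"
proof (rule subspace_dim_equal)
  show "subspace {v. L *v v = \<gamma> *\<^sub>R v}"
    by (auto simp: subspace_def matrix_vector_right_distrib matrix_vector_mult_scaleR algebra_simps)
  show "subspace {v. (1::real^'n) \<bullet> v = 0}" by (rule subspace_hyperplane)
  show "{v. L *v v = \<gamma> *\<^sub>R v} \<subseteq> {v. 1 \<bullet> v = 0}"
  proof safe
    fix v assume "L *v v = \<gamma> *\<^sub>R v"
    then have "\<gamma> * (1 \<bullet> v) = (L *v 1) \<bullet> v"
      by (simp add: symmetric_matrix_inner_commute[OF sym])
    with L1 \<open>\<gamma> \<noteq> 0\<close> show "1 \<bullet> v = 0" by simp
  qed
  have "(1::real^'n) \<noteq> 0" by (simp add: vec_eq_iff)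
  then show "dim {v. (1::real^'n) \<bullet> v = 0} \<le> dim {v. L *v v = \<gamma> *\<^sub>R v}"
    using dim_hyperplane[of "1::real^'n"] dim by simp
qed

lemma orthogonal_common_eigenbasis:
  fixes L B :: "real^'n::finite^'n"
  assumes L_sym: "transpose L = L" and L_rows: "\<forall>i. (\<Sum>j\<in>UNIV. L $ i $ j) = 0"
    and "\<gamma> \<noteq> 0" and L_mult: "dim {v. L *v v = \<gamma> *\<^sub>R v} = CARD('n) - 1"
    and B_sym: "transpose B = B" and B_rows: "\<forall>i. (\<Sum>j\<in>UNIV. B $ i $ j) = e"
  obtains V i1 \<Gamma> where "orthogonal_matrix V" "column i1 V = (\<chi> j. 1 / sqrt (real CARD('n)))"
    "\<And>i. B *v column i V = \<Gamma> i *\<^sub>R column i V"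
    "\<And>i. i \<noteq> i1 \<Longrightarrow> L *v column i V = \<gamma> *\<^sub>R column i V"
proof -
  define u :: "real^'n" where "u = (\<chi> j. 1 / sqrt (real CARD('n)))"
  have "norm u = 1"
    by (simp add: u_def norm_eq_1 inner_vec_def)
  moreover have "B *v u = e *\<^sub>R u"
    using B_rows by (simp add: u_def vec_eq_iff matrix_vector_mult_def sum_divide_distrib[symmetric])
  ultimately obtain V i1 \<Gamma> where V: "orthogonal_matrix V" "column i1 V = u"
    and B_eig: "\<And>i. B *v column i V = \<Gamma> i *\<^sub>R column i V"
    using symmetric_matrix_orthogonal_eigenbasis[OF B_sym] by metis
  have L_eig: "L *v column i V = \<gamma> *\<^sub>R column i V" if "i \<noteq> i1" for i
  proof -
    have "u \<bullet> column i V = 0"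
      using V that by (metis orthogonal_def orthogonal_matrix_orthonormal_columns)
    then have "1 \<bullet> column i V = 0"
      by (simp add: u_def inner_vec_def sum_divide_distrib[symmetric])
    moreover have "L *v 1 = 0"
      using L_rows by (simp add: vec_eq_iff matrix_vector_mult_def)
    ultimately show ?thesis
      using eigenspace_eq_orthogonal_1[OF L_sym _ \<open>\<gamma> \<noteq> 0\<close> L_mult] by blast
  qed
  show thesis by (rule that[OF V(1) V(2)[unfolded u_def] B_eig L_eig])
qed

theorem mainTheorem2:
  fixes L B :: "real^'n^'n"
    and \<gamma> e \<epsilon> lam d1 :: real
    and xs ys :: "real \<Rightarrow> real^'d"
    and F1 F2 :: "real^'d \<Rightarrow> real^'d"
    and G1 G2 H1 H2 :: "real^'d \<Rightarrow> real^'d \<Rightarrow> real^'d"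
  assumes N2: "CARD('n) \<ge> 2"
    and L_sym: "transpose L = L"
    and L_rows: "\<forall>i. (\<Sum>j\<in>UNIV. L $ i $ j) = 0"
    and L_spec: "\<forall>c. (\<exists>v. v \<noteq> 0 \<and> L *v v = c *\<^sub>R v) \<longrightarrow> c = 0 \<or> c = \<gamma>"
    and L_simple0: "dim {v. L *v v = 0} = 1"
    and L_mult\<gamma>: "dim {v. L *v v = \<gamma> *\<^sub>R v} = CARD('n) - 1"
    and \<gamma>_ne0: "\<gamma> \<noteq> 0"
    and B_sym: "transpose B = B"
    and B_rows: "\<forall>i. (\<Sum>j\<in>UNIV. B $ i $ j) = e"
    and C1: "C1_map F1" "C1_map F2"
       "C1_map (\<lambda>p. G1 (fst p) (snd p))" "C1_map (\<lambda>p. G2 (fst p) (snd p))"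
       "C1_map (\<lambda>p. H1 (fst p) (snd p))" "C1_map (\<lambda>p. H2 (fst p) (snd p))"
  shows "\<exists>V :: real^'n^'n. \<exists>i1. \<exists>\<Gamma> :: 'n \<Rightarrow> real.
     orthogonal_matrix V \<and>
     column i1 V = (\<chi> j. 1 / sqrt (real CARD('n))) \<and>
     (\<forall>i. i \<noteq> i1 \<longrightarrow> B *v column i V = \<Gamma> i *\<^sub>R column i V) \<and>
     (\<forall>(dx :: real \<Rightarrow> real^('n \<times> 'd)) (dy :: real \<Rightarrow> real^('n \<times> 'd)).
        (\<forall>t. (dx has_vector_derivative
               ((kron (mat 1) (jac F1 (xs t)
                    + (\<epsilon> * d1) *\<^sub>R (jacJ G1 (xs t) (xs t) + jacD G1 (xs t) (xs t))
                    + (lam * e) *\<^sub>R jacJ H1 (xs t) (ys t))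
                 - \<epsilon> *\<^sub>R kron L (jacD G1 (xs t) (xs t))) *v dx t
                + lam *\<^sub>R (kron B (jacD H1 (xs t) (ys t)) *v dy t))) (at t)
          \<and> (dy has_vector_derivative
               ((kron (mat 1) (jac F2 (ys t)
                    + (\<epsilon> * d1) *\<^sub>R (jacJ G2 (ys t) (ys t) + jacD G2 (ys t) (ys t))
                    + (lam * e) *\<^sub>R jacJ H2 (ys t) (xs t))
                 - \<epsilon> *\<^sub>R kron L (jacD G2 (ys t) (ys t))) *v dy t
                + lam *\<^sub>R (kron B (jacD H2 (ys t) (xs t)) *v dx t))) (at t))
        \<longrightarrow>
        (\<forall>i t. i \<noteq> i1 \<longrightarrow>
          ((\<lambda>s. blk (transpose (kron V (mat 1 :: real^'d^'d)) *v dx s) i) has_vector_derivative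
             ((jac F1 (xs t)
               + (\<epsilon> * d1) *\<^sub>R (jacJ G1 (xs t) (xs t) + jacD G1 (xs t) (xs t))
               - (\<epsilon> * \<gamma>) *\<^sub>R jacD G1 (xs t) (xs t)
               + (lam * e) *\<^sub>R jacJ H1 (xs t) (ys t))
                *v blk (transpose (kron V (mat 1 :: real^'d^'d)) *v dx t) i
              + (lam * \<Gamma> i) *\<^sub>R (jacD H1 (xs t) (ys t)
                *v blk (transpose (kron V (mat 1 :: real^'d^'d)) *v dy t) i))) (at t)
          \<and>
          ((\<lambda>s. blk (transpose (kron V (mat 1 :: real^'d^'d)) *v dy s) i) has_vector_derivative
             ((jac F2 (ys t)
               + (\<epsilon> * d1) *\<^sub>R (jacJ G2 (ys t) (ys t) + jacD G2 (ys t) (ys t))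
               - (\<epsilon> * \<gamma>) *\<^sub>R jacD G2 (ys t) (ys t)
               + (lam * e) *\<^sub>R jacJ H2 (ys t) (xs t))
                *v blk (transpose (kron V (mat 1 :: real^'d^'d)) *v dy t) i
              + (lam * \<Gamma> i) *\<^sub>R (jacD H2 (ys t) (xs t)
                *v blk (transpose (kron V (mat 1 :: real^'d^'d)) *v dx t) i))) (at t)))"
proof -
  obtain V i1 \<Gamma> where V: "orthogonal_matrix V" "column i1 V = (\<chi> j. 1 / sqrt (real CARD('n)))"
    and B_eig: "\<And>i. B *v column i V = \<Gamma> i *\<^sub>R column i V"
    and L_eig: "\<And>i. i \<noteq> i1 \<Longrightarrow> L *v column i V = \<gamma> *\<^sub>R column i V"
    using orthogonal_common_eigenbasis[OF L_sym L_rows \<gamma>_ne0 L_mult\<gamma> B_sym B_rows] by blast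
  have L_left: "transpose L *v column i V = \<gamma> *\<^sub>R column i V" if "i \<noteq> i1" for i
    using L_eig[OF that] by (simp only: L_sym)
  have B_left: "transpose B *v column i V = \<Gamma> i *\<^sub>R column i V" for i
    using B_eig by (simp only: B_sym)
  have reorder: "P + Q - k *\<^sub>R S + R = P + Q + R - k *\<^sub>R S" for P Q R S :: "real^'d^'d" and k :: real
    by simp
  show ?thesis
  proof (intro exI[of _ V] exI[of _ i1] exI[of _ \<Gamma>] conjI allI impI, goal_cases)
    case (4 dx dy i t)
    show ?case unfolding reorder
      by (rule transverse_mode_has_vector_derivative[OF L_left[OF 4(2)] B_left]) (use 4(1) in blast)
  next
    case (5 dx dy i t)
    show ?case unfolding reorder
      by (rule transverse_mode_has_vector_derivative[OF L_left[OF 5(2)] B_left]) (use 5(1) in blast)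
  qed (use V B_eig in auto)
qed

end
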